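(* Let $H$ be a string, $s\ge0$ an integer, and $j\in\mathsf{R}_{s,H}$. For any $j'\in[1\mathinner{.\,.}n]$, $\mathrm{LCE}(j,j')\ge3\tau-1$ holds if and only if $j'\in\mathsf{R}_{s,H}$. Moreover, if $j'\in\mathsf{R}_{s,H}$ then, letting $t=\mathrm{end}(j)-j$ and $t'=\mathrm{end}(j')-j'$, it holds $\mathrm{LCE}(j,j')\ge\min(t,t')$ and: (1) if $\mathrm{type}(j)\ne\mathrm{type}(j')$, then $T[j\mathinner{.\,.}n]\prec T[j'\mathinner{.\,.}n]$ iff $\mathrm{type}(j)<\mathrm{type}(j')$; (2) if $\mathrm{type}(j)=\mathrm{type}(j')=-1$ and $t\ne t'$, then $T[j\mathinner{.\,.}n]\prec T[j'\mathinner{.\,.}n]$ iff $t<t'$; (3) if $\mathrm{type}(j)=\mathrm{type}(j')=+1$ and $t\ne t'$, then $T[j\mathinner{.\,.}n]\prec T[j'\mathinner{.\,.}n]$ iff $t>t'$; (4) if $\mathrm{type}(j)\ne\mathrm{type}(j')$ or $t\ne t'$, then $\mathrm{LCE}(j,j')=\min(t,t')$.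
   Context: $T\in[0\mathinner{.\,.}\sigma)^n$ with $2\le\sigma<n^{1/7}$; $\tau=\lfloor\mu\log_\sigma n\rfloor$ for a fixed positive constant $\mu<1/6$ with $\tau\ge1$. $\prec$ is lexicographic order. $\mathrm{per}(S)$ is the shortest period of $S$. $\mathsf{R}=\{i\in[1\mathinner{.\,.}n-3\tau+2]:\mathrm{per}(T[i\mathinner{.\,.}i+3\tau-2])\le\tau/3\}$. $\mathrm{LCE}(i,i')$ is the length of the longest common prefix of $T[i\mathinner{.\,.}n]$ and $T[i'\mathinner{.\,.}n]$. For $j\in\mathsf{R}$: $\mathrm{end}(j)=\min\{j'\ge j:j'\notin\mathsf{R}\}+3\tau-2$; with $p=\mathrm{per}(T[j\mathinner{.\,.}j+3\tau-1))$, $\mathrm{Lroot}(j)=\min\{T[j+t\mathinner{.\,.}j+t+p):t\in[0\mathinner{.\,.}p)\}$ (lexicographic minimum). With $H=\mathrm{Lroot}(j)$, $T[j\mathinner{.\,.}\mathrm{end}(j))$ can be uniquely written as $H'H^kH''$ with $H'$ a proper suffix and $H''$ a proper prefix of $H$ (the L-decomposition); $\mathrm{Lhead}(j)=|H'|$. $\mathrm{type}(j)=+1$ if $\mathrm{end}(j)\le n$ and $T[\mathrm{end}(j)]\succ T[\mathrm{end}(j)-|H|]$, and $\mathrm{type}(j)=-1$ otherwise. $\mathsf{R}_{s,H}=\{j\in\mathsf{R}:\mathrm{Lroot}(j)=H,\ \mathrm{Lhead}(j)=s\}$. *)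

theory Defs
  imports Complex_Main "HOL-Library.Sublist" "HOL-Library.List_Lexorder"
begin

(* Conventions: the text T is a list of naturals, positions are 1-based:
   T[i] = T ! (i-1); n = length T.  Lexicographic order on strings is the
   order "<" from List_Lexorder (a proper prefix is smaller). *)

definition sub :: "nat list \<Rightarrow> nat \<Rightarrow> nat \<Rightarrow> nat list" where
  "sub T i j = take (j - i) (drop (i - 1) T)"

definition suf :: "nat list \<Rightarrow> nat \<Rightarrow> nat list" where
  "suf T i = drop (i - 1) T"

definition is_period :: "'a list \<Rightarrow> nat \<Rightarrow> bool" where
  "is_period S p \<longleftrightarrow> 0 < p \<and> p \<le> length S \<and> (\<forall>i. i + p < length S \<longrightarrow> S ! i = S ! (i + p))"

definition per :: "'a list \<Rightarrow> nat" where
  "per S = (LEAST p. is_period S p)"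

definition Rset :: "nat list \<Rightarrow> nat \<Rightarrow> nat set" where
  "Rset T \<tau> = {i. 1 \<le> i \<and> i + 3 * \<tau> \<le> length T + 2 \<and>
                 real (per (sub T i (i + 3 * \<tau> - 1))) \<le> real \<tau> / 3}"

definition LCE :: "nat list \<Rightarrow> nat \<Rightarrow> nat \<Rightarrow> nat" where
  "LCE T i i' = length (longest_common_prefix (suf T i) (suf T i'))"

definition endp :: "nat list \<Rightarrow> nat \<Rightarrow> nat \<Rightarrow> nat" where
  "endp T \<tau> j = (LEAST j'. j \<le> j' \<and> j' \<notin> Rset T \<tau>) + 3 * \<tau> - 2"

definition Lroot :: "nat list \<Rightarrow> nat \<Rightarrow> nat \<Rightarrow> nat list" where
  "Lroot T \<tau> j = (let p = per (sub T j (j + 3 * \<tau> - 1)) in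
                    Min {sub T (j + t) (j + t + p) | t. t < p})"

definition Lhead :: "nat list \<Rightarrow> nat \<Rightarrow> nat \<Rightarrow> nat" where
  "Lhead T \<tau> j = (let H = Lroot T \<tau> j in
     THE s. \<exists>H' k H''. sub T j (endp T \<tau> j) = H' @ concat (replicate k H) @ H'' \<and>
        strict_suffix H' H \<and> strict_prefix H'' H \<and> length H' = s)"

definition ltype :: "nat list \<Rightarrow> nat \<Rightarrow> nat \<Rightarrow> int" where
  "ltype T \<tau> j = (let e = endp T \<tau> j; H = Lroot T \<tau> j in
     if e \<le> length T \<and> T ! (e - 1) > T ! (e - length H - 1) then 1 else -1)"

definition RsH :: "nat list \<Rightarrow> nat \<Rightarrow> nat \<Rightarrow> nat list \<Rightarrow> nat set" where
  "RsH T \<tau> s H = {j \<in> Rset T \<tau>. Lroot T \<tau> j = H \<and> Lhead T \<tau> j = s}"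

end

theory Submission
  imports Defs
begin

text \<open>For \<open>j \<in> R\<close> the shortest period \<open>p\<close> of the windows \<open>T[i..i+3\<tau>-1)\<close> is the same for
  all \<open>i\<close> in the run of \<open>R\<close> starting at \<open>j\<close>, because two windows shifted by one position,
  with periods \<open>p, p' \<le> \<tau>/3\<close>, overlap in more than \<open>p + p'\<close> letters and hence share the
  smaller period. So \<open>T[j..end(j))\<close> has period \<open>p\<close>, which breaks at \<open>end(j)\<close>. The root
  \<open>Lroot(j)\<close> is a rotation of \<open>T[j..j+p)\<close>, and as no shorter period exists, \<open>Lhead(j)\<close> is
  the unique \<open>s\<close> with \<open>T[j+i] = H[(i - s) mod |H|]\<close> for \<open>i < end(j) - j\<close>.
  Hence all \<open>j \<in> R\<^sub>s\<^sub>,\<^sub>H\<close> spell the same periodic word up to \<open>t = end(j) - j\<close>, and two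
  such suffixes first differ at position \<open>min t t'\<close>: there the shorter run breaks while the
  longer one continues the period, so the direction of the break, i.e. the type, decides the
  order. Conversely a common prefix of length \<open>3\<tau> - 1\<close> makes the first windows equal, and
  the first window determines membership in \<open>R\<close>, the root and the head.\<close>

section \<open>Longest common prefixes and lexicographic order\<close>

lemma longest_common_prefix_commute:
  "longest_common_prefix xs ys = longest_common_prefix ys xs"
  by (induction xs ys rule: longest_common_prefix.induct) auto

lemma le_length_longest_common_prefix_iff:
  "m \<le> length (longest_common_prefix u v) \<longleftrightarrow>
     m \<le> length u \<and> m \<le> length v \<and> (\<forall>i<m. u ! i = v ! i)"
proof
  assume m: "m \<le> length (longest_common_prefix u v)"
  obtain w w' where "u = longest_common_prefix u v @ w" "v = longest_common_prefix u v @ w'"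
    using longest_common_prefix_prefix1 longest_common_prefix_prefix2 by (metis prefixE)
  then show "m \<le> length u \<and> m \<le> length v \<and> (\<forall>i<m. u ! i = v ! i)"
    using m by (metis le_trans length_append le_add1 order.strict_trans2 nth_append)
next
  assume agree: "m \<le> length u \<and> m \<le> length v \<and> (\<forall>i<m. u ! i = v ! i)"
  then have "take m u = take m v"
    by (intro nth_equalityI) auto
  then have "prefix (take m u) (longest_common_prefix u v)"
    by (metis longest_common_prefix_max_prefix take_is_prefix)
  then show "m \<le> length (longest_common_prefix u v)"
    using agree by (metis length_take min.absorb2 prefix_length_le)
qed

lemma list_less_at_first_mismatch:
  fixes u v :: "'a::linorder list"
  assumes "m \<le> length u" and "m < length v" and agree: "\<forall>i<m. u ! i = v ! i"
    and mismatch: "m < length u \<Longrightarrow> u ! m < v ! m"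
  shows "u < v" and "length (longest_common_prefix u v) = m"
proof -
  have take_eq: "take m u = take m v"
    using assms by (intro nth_equalityI) auto
  show "u < v"
  proof (cases "m < length u")
    case True
    then show ?thesis
      unfolding list_less_def lexord_take_index_conv
      using assms take_eq by (intro disjI2 exI[of _ m]) auto
  next
    case False
    then show ?thesis
      unfolding list_less_def lexord_take_index_conv
      using assms take_eq by auto
  qed
  have "m \<le> length (longest_common_prefix u v)"
    using assms by (simp add: le_length_longest_common_prefix_iff)
  moreover have "\<not> Suc m \<le> length (longest_common_prefix u v)"
    using mismatch \<open>m \<le> length u\<close>
    unfolding le_length_longest_common_prefix_iff by fastforce
  ultimately show "length (longest_common_prefix u v) = m"
    by simp
qed

section \<open>Comparing maximal periodic prefixes\<close>

definition max_periodic_prefix :: "'a list \<Rightarrow> nat \<Rightarrow> nat \<Rightarrow> bool" where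
  "max_periodic_prefix u p t \<longleftrightarrow> 0 < p \<and> p \<le> t \<and> t \<le> length u
     \<and> (\<forall>i. i + p < t \<longrightarrow> u ! i = u ! (i + p)) \<and> (t < length u \<longrightarrow> u ! t \<noteq> u ! (t - p))"

definition breaks_upward :: "'a::ord list \<Rightarrow> nat \<Rightarrow> nat \<Rightarrow> bool" where
  "breaks_upward u p t \<longleftrightarrow> t < length u \<and> u ! (t - p) < u ! t"

lemma compare_shorter_max_periodic_prefix:
  fixes u v :: "'a::linorder list"
  assumes u: "max_periodic_prefix u p t" and v: "max_periodic_prefix v p t'" and "t < t'"
    and agree: "\<forall>i<t. u ! i = v ! i"
  shows "if breaks_upward u p t then v < u else u < v"
    and "length (longest_common_prefix u v) = t"
proof -
  have "v ! t = v ! (t - p + p)"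
    using u v \<open>t < t'\<close> unfolding max_periodic_prefix_def by simp
  also have "\<dots> = v ! (t - p)"
    using v \<open>t < t'\<close> u unfolding max_periodic_prefix_def
    by (metis le_add_diff_inverse2)
  also have "\<dots> = u ! (t - p)"
    using agree u unfolding max_periodic_prefix_def by simp
  finally have continues: "v ! t = u ! (t - p)" .
  have len: "t \<le> length u" "t < length v"
    using u v \<open>t < t'\<close> unfolding max_periodic_prefix_def by auto
  have "(if breaks_upward u p t then v < u else u < v)
    \<and> length (longest_common_prefix u v) = t"
  proof (cases "breaks_upward u p t")
    case True
    then have "t < length u" "v ! t < u ! t"
      using continues unfolding breaks_upward_def by auto
    then show ?thesis
      using True len agree list_less_at_first_mismatch[of t v u]
      by (simp add: longest_common_prefix_commute)
  next
    case False
    then have "t < length u \<Longrightarrow> u ! t < v ! t"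
      using continues u unfolding breaks_upward_def max_periodic_prefix_def by auto
    then show ?thesis
      using False len agree list_less_at_first_mismatch[of t u v] by simp
  qed
  then show "if breaks_upward u p t then v < u else u < v"
    and "length (longest_common_prefix u v) = t"
    by simp_all
qed

lemma compare_equal_max_periodic_prefixes:
  fixes u v :: "'a::linorder list"
  assumes u: "max_periodic_prefix u p t" and v: "max_periodic_prefix v p t"
    and agree: "\<forall>i<t. u ! i = v ! i"
    and "breaks_upward u p t" and "\<not> breaks_upward v p t"
  shows "v < u" and "length (longest_common_prefix u v) = t"
proof -
  have "v ! (t - p) = u ! (t - p)"
    using agree u unfolding max_periodic_prefix_def by simp
  moreover have "t < length u" "u ! (t - p) < u ! t"
    using \<open>breaks_upward u p t\<close> unfolding breaks_upward_def by auto
  ultimately have "t < length v \<Longrightarrow> v ! t < u ! t"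
    using v \<open>\<not> breaks_upward v p t\<close>
    unfolding breaks_upward_def max_periodic_prefix_def by auto
  then show "v < u" and "length (longest_common_prefix u v) = t"
    using list_less_at_first_mismatch[of t v u] u v agree \<open>t < length u\<close>
    unfolding max_periodic_prefix_def by (auto simp: longest_common_prefix_commute)
qed

lemma compare_max_periodic_prefixes:
  fixes u v :: "'a::linorder list"
  assumes u: "max_periodic_prefix u p t" and v: "max_periodic_prefix v p t'"
    and agree: "\<forall>i<min t t'. u ! i = v ! i"
  defines "b \<equiv> breaks_upward u p t" and "b' \<equiv> breaks_upward v p t'"
  shows "min t t' \<le> length (longest_common_prefix u v)"
    and "b \<noteq> b' \<Longrightarrow> u < v \<longleftrightarrow> b'"
    and "\<not> b \<Longrightarrow> \<not> b' \<Longrightarrow> t \<noteq> t' \<Longrightarrow> u < v \<longleftrightarrow> t < t'"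
    and "b \<Longrightarrow> b' \<Longrightarrow> t \<noteq> t' \<Longrightarrow> u < v \<longleftrightarrow> t' < t"
    and "b \<noteq> b' \<or> t \<noteq> t' \<Longrightarrow> length (longest_common_prefix u v) = min t t'"
proof -
  show "min t t' \<le> length (longest_common_prefix u v)"
    using u v agree unfolding le_length_longest_common_prefix_iff max_periodic_prefix_def
    by auto
  have shorter: "(u < v \<longleftrightarrow> \<not> b) \<and> length (longest_common_prefix u v) = t" if "t < t'"
    using compare_shorter_max_periodic_prefix[OF u v that] agree that
    by (cases b) (auto simp: b_def dest: less_not_sym)
  have longer: "(u < v \<longleftrightarrow> b') \<and> length (longest_common_prefix u v) = t'" if "t' < t"
    using compare_shorter_max_periodic_prefix[OF v u that] agree that
    by (cases b') (auto simp: b'_def longest_common_prefix_commute dest: less_not_sym)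
  have equal: "(u < v \<longleftrightarrow> b') \<and> length (longest_common_prefix u v) = t"
    if "t = t'" "b \<noteq> b'"
  proof (cases b)
    case True
    then show ?thesis
      using compare_equal_max_periodic_prefixes[of u p t v] u v agree that
      unfolding b_def b'_def by (auto dest: less_not_sym)
  next
    case False
    then show ?thesis
      using compare_equal_max_periodic_prefixes[of v p t u] u v agree that
      unfolding b_def b'_def by (auto simp: longest_common_prefix_commute)
  qed
  show "b \<noteq> b' \<Longrightarrow> u < v \<longleftrightarrow> b'"
    using shorter longer equal by (cases t t' rule: linorder_cases) auto
  show "\<not> b \<Longrightarrow> \<not> b' \<Longrightarrow> t \<noteq> t' \<Longrightarrow> u < v \<longleftrightarrow> t < t'"
    using shorter longer by (cases t t' rule: linorder_cases) auto
  show "b \<Longrightarrow> b' \<Longrightarrow> t \<noteq> t' \<Longrightarrow> u < v \<longleftrightarrow> t' < t"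
    using shorter longer by (cases t t' rule: linorder_cases) auto
  show "b \<noteq> b' \<or> t \<noteq> t' \<Longrightarrow> length (longest_common_prefix u v) = min t t'"
    using shorter longer equal by (cases t t' rule: linorder_cases) auto
qed

section \<open>Periodicity and L-decompositions\<close>

lemma is_period_per: "S \<noteq> [] \<Longrightarrow> is_period S (per S)"
  unfolding per_def by (rule LeastI[of _ "length S"]) (simp add: is_period_def)

lemma per_le: "is_period S q \<Longrightarrow> per S \<le> q"
  unfolding per_def by (rule Least_le)

lemma per_take_le:
  assumes "\<forall>i. i + d < length X \<longrightarrow> X ! i = X ! (i + d)" and "0 < d" and "d \<le> L"
    and "L \<le> length X"
  shows "per (take L X) \<le> d"
  using assms by (intro per_le) (simp add: is_period_def)

lemma nth_mod_period:
  assumes "0 < p" and period: "\<forall>i. i + p < length xs \<longrightarrow> xs ! i = xs ! (i + p)"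
    and "a < length xs"
  shows "xs ! a = xs ! (a mod p)"
  using \<open>a < length xs\<close>
proof (induction a rule: less_induct)
  case (less a)
  show ?case
  proof (cases "a < p")
    case False
    then have "xs ! (a - p) = xs ! (a - p + p)"
      using period less.prems by simp
    moreover have "xs ! (a - p) = xs ! ((a - p) mod p)"
      using less.IH[of "a - p"] less.prems \<open>0 < p\<close> False by simp
    ultimately show ?thesis
      using False by (simp add: le_mod_geq)
  qed simp
qed

lemma nth_concat_replicate_append_take:
  assumes "length H = p" and "r \<le> p" and "i < k * p + r"
  shows "(concat (replicate k H) @ take r H) ! i = H ! (i mod p)"
  using \<open>i < k * p + r\<close>
proof (induction k arbitrary: i)
  case (Suc k)
  show ?case
  proof (cases "i < p")
    case False
    then have "(concat (replicate k H) @ take r H) ! (i - p) = H ! (i mod p)"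
      using Suc by (simp add: le_mod_geq)
    then show ?thesis
      using False assms(1) by (simp add: nth_append)
  qed (use assms in \<open>simp add: nth_append\<close>)
qed (use assms in simp)

definition L_decomposition :: "'a list \<Rightarrow> 'a list \<Rightarrow> nat \<Rightarrow> bool" where
  "L_decomposition X H s \<longleftrightarrow> (\<exists>H' k H''. X = H' @ concat (replicate k H) @ H''
     \<and> strict_suffix H' H \<and> strict_prefix H'' H \<and> length H' = s)"

lemma L_decomposition_nth:
  assumes "L_decomposition X H s"
  shows "s < length H" and "\<forall>i<length X. X ! i = H ! ((i + length H - s) mod length H)"
proof -
  define p where "p = length H"
  obtain H' k H'' where X: "X = H' @ concat (replicate k H) @ H''"
    and "strict_suffix H' H" "strict_prefix H'' H" "length H' = s"
    using assms unfolding L_decomposition_def by blast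
  then have "s < p" "length H'' < p"
    unfolding p_def by (auto dest: suffix_length_less prefix_length_less)
  then show "s < length H"
    by (simp add: p_def)
  have H: "H = take (p - s) H @ H'"
    using suffix_take[of H' H] \<open>strict_suffix H' H\<close> \<open>length H' = s\<close> p_def by auto
  have H': "H' = drop (p - s) H"
  proof -
    have "drop (p - s) H = drop (p - s) (take (p - s) H @ H')"
      using H by simp
    also have "\<dots> = H'"
      using \<open>s < p\<close> p_def by simp
    finally show ?thesis by simp
  qed
  have H'': "H'' = take (length H'') H"
    using \<open>strict_prefix H'' H\<close> by (metis append_eq_conv_conj prefixE strict_prefix_def)
  have len_concat: "length (concat (replicate k H)) = k * p"
    by (simp add: p_def length_concat sum_list_replicate)
  show "\<forall>i<length X. X ! i = H ! ((i + length H - s) mod length H)"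
  proof (intro allI impI)
    fix i assume i: "i < length X"
    show "X ! i = H ! ((i + length H - s) mod length H)"
    proof (cases "i < s")
      case True
      then show ?thesis
        using X H' \<open>length H' = s\<close> \<open>s < p\<close> by (simp add: p_def nth_append add.commute)
    next
      case False
      have "(concat (replicate k H) @ take (length H'') H) ! (i - s) = H ! ((i - s) mod p)"
        using nth_concat_replicate_append_take[of H p "length H''" "i - s" k]
          \<open>length H'' < p\<close> i False X \<open>length H' = s\<close> len_concat p_def by simp
      moreover have "(i + p - s) mod p = (i - s) mod p"
        using False by (metis Nat.add_diff_assoc2 mod_add_self2 not_less)
      ultimately show ?thesis
        using X \<open>length H' = s\<close> False H'' by (simp add: p_def nth_append)
    qed
  qed
qed

lemma nth_eq_rotation:
  assumes "0 < p" and "t0 < p" and "t0 + p \<le> length X"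
    and period: "\<forall>i. i + p < length X \<longrightarrow> X ! i = X ! (i + p)" and "i < length X"
  shows "X ! i = take p (drop t0 X) ! ((i + p - t0) mod p)"
proof -
  have "take p (drop t0 X) ! ((i + p - t0) mod p) = X ! (t0 + (i + p - t0) mod p)"
    using assms by simp
  also have "\<dots> = X ! ((t0 + (i + p - t0) mod p) mod p)"
    using nth_mod_period[OF \<open>0 < p\<close> period] assms
    by (meson add_less_mono1 mod_less_divisor order.strict_trans2 add_strict_left_mono)
  also have "(t0 + (i + p - t0) mod p) mod p = i mod p"
    using \<open>t0 < p\<close> by (simp add: mod_add_right_eq)
  also have "X ! (i mod p) = X ! i"
    using nth_mod_period[OF \<open>0 < p\<close> period \<open>i < length X\<close>] by simp
  finally show ?thesis by simp
qed

lemma L_decomposition_rotation: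
  assumes "0 < p" and "t0 < p" and "t0 + p \<le> length X"
    and period: "\<forall>i. i + p < length X \<longrightarrow> X ! i = X ! (i + p)"
  shows "L_decomposition X (take p (drop t0 X)) t0"
proof -
  define H where "H = take p (drop t0 X)"
  have len_H: "length H = p"
    using assms by (simp add: H_def)
  note rotated = nth_eq_rotation[OF assms, folded H_def]
  define k where "k = (length X - t0) div p"
  define r where "r = (length X - t0) mod p"
  have len_concat: "length (concat (replicate k H)) = k * p"
    using len_H by (simp add: length_concat sum_list_replicate)
  have "X = drop (p - t0) H @ concat (replicate k H) @ take r H"
  proof (rule nth_equalityI)
    show "length X = length (drop (p - t0) H @ concat (replicate k H) @ take r H)"
      using len_concat len_H assms \<open>0 < p\<close> by (simp add: k_def r_def)
    fix i assume i: "i < length X"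
    show "X ! i = (drop (p - t0) H @ concat (replicate k H) @ take r H) ! i"
    proof (cases "i < t0")
      case True
      have "(i + p - t0) mod p = p - t0 + i"
        using True \<open>t0 < p\<close> by simp
      then show ?thesis
        using True rotated i len_H \<open>t0 < p\<close> by (simp add: nth_append)
    next
      case False
      have "(concat (replicate k H) @ take r H) ! (i - t0) = H ! ((i - t0) mod p)"
        using nth_concat_replicate_append_take[OF len_H, of r "i - t0" k] i False \<open>0 < p\<close>
        by (simp add: k_def r_def less_imp_le_nat)
      moreover have "(i + p - t0) mod p = (i - t0) mod p"
        using False by (metis Nat.add_diff_assoc2 mod_add_self2 not_less)
      ultimately show ?thesis
        using rotated i False len_H \<open>t0 < p\<close> by (simp add: nth_append)
    qed
  qed
  moreover have "strict_suffix (drop (p - t0) H) H"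
    using len_H \<open>t0 < p\<close>
    by (metis diff_diff_cancel length_drop less_imp_le_nat nat_neq_iff strict_suffix_def
        suffix_drop)
  moreover have "strict_prefix (take r H) H"
  proof -
    have "r < length H"
      using len_H \<open>0 < p\<close> by (simp add: r_def)
    then show ?thesis
      using take_is_prefix[of r H] by (auto simp: strict_prefix_def dest: arg_cong[of _ _ length])
  qed
  ultimately show ?thesis
    unfolding L_decomposition_def H_def[symmetric] using len_H \<open>t0 < p\<close> by fastforce
qed

lemma L_decomposition_unique:
  assumes s: "L_decomposition X H s" and s': "L_decomposition X H s'"
    and primitive: "\<forall>d. 0 < d \<and> d < length H \<longrightarrow> \<not> (\<forall>i. i + d < length X \<longrightarrow> X ! i = X ! (i + d))"
  shows "s = s'"
proof (rule ccontr)
  assume "s \<noteq> s'"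
  define p where "p = length H"
  note nth_s = L_decomposition_nth[OF s, folded p_def]
    and nth_s' = L_decomposition_nth[OF s', folded p_def]
  define d where "d = (if s < s' then s' - s else s' + p - s)"
  have d: "0 < d" "d < p"
    using \<open>s \<noteq> s'\<close> nth_s(1) nth_s'(1) by (auto simp: d_def)
  have "X ! i = X ! (i + d)" if "i + d < length X" for i
  proof -
    have "X ! (i + d) = H ! ((i + d + p - s') mod p)"
      using nth_s'(2) that by simp
    also have "(i + d + p - s') mod p = (i + p - s) mod p"
    proof (cases "s < s'")
      case False
      then have "i + d + p - s' = (i + p - s) + p"
        using nth_s(1) nth_s'(1) by (simp add: d_def)
      then show ?thesis by simp
    qed (simp add: d_def)
    also have "H ! ((i + p - s) mod p) = X ! i"
      using nth_s(2) that by simp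
    finally show ?thesis by simp
  qed
  then show False
    using primitive d p_def by blast
qed

section \<open>Runs of periodic windows\<close>

abbreviation window :: "nat list \<Rightarrow> nat \<Rightarrow> nat \<Rightarrow> nat list" where
  "window T \<tau> i \<equiv> sub T i (i + 3 * \<tau> - 1)"

lemma window_eq_take_suf: "window T \<tau> i = take (3 * \<tau> - 1) (suf T i)"
  by (simp add: sub_def suf_def)

lemma Rset_iff:
  "i \<in> Rset T \<tau> \<longleftrightarrow> 1 \<le> i \<and> i + 3 * \<tau> \<le> length T + 2 \<and> 3 * per (window T \<tau> i) \<le> \<tau>"
  unfolding Rset_def by (auto simp: field_simps)

text \<open>Unlike \<^const>\<open>sub\<close> and \<^const>\<open>suf\<close>, the start \<open>a\<close> is 0-based:
  \<open>window_period T (i - 1) L q\<close> says that \<open>T[i..i+L)\<close> has period \<open>q\<close>.\<close>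
definition window_period :: "'a list \<Rightarrow> nat \<Rightarrow> nat \<Rightarrow> nat \<Rightarrow> bool" where
  "window_period T a L q \<longleftrightarrow> (\<forall>y. a \<le> y \<and> y + q < a + L \<longrightarrow> T ! y = T ! (y + q))"

lemma window_periodD:
  "window_period T a L q \<Longrightarrow> a \<le> y \<Longrightarrow> y + q < a + L \<Longrightarrow> T ! y = T ! (y + q)"
  unfolding window_period_def by blast

lemma is_period_window_iff:
  assumes "1 \<le> i" and "i + 3 * \<tau> \<le> length T + 2"
  shows "is_period (window T \<tau> i) q \<longleftrightarrow>
    0 < q \<and> q \<le> 3 * \<tau> - 1 \<and> window_period T (i - 1) (3 * \<tau> - 1) q"
proof -
  let ?W = "window T \<tau> i"
  have len: "length ?W = 3 * \<tau> - 1" and nth: "\<And>x. x < 3 * \<tau> - 1 \<Longrightarrow> ?W ! x = T ! (i - 1 + x)"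
    using assms by (simp_all add: sub_def)
  have "(\<forall>x. x + q < 3 * \<tau> - 1 \<longrightarrow> ?W ! x = ?W ! (x + q)) \<longleftrightarrow>
    window_period T (i - 1) (3 * \<tau> - 1) q"
    unfolding window_period_def
  proof safe
    fix y assume "\<forall>x. x + q < 3 * \<tau> - 1 \<longrightarrow> ?W ! x = ?W ! (x + q)"
      and y: "i - 1 \<le> y" "y + q < i - 1 + (3 * \<tau> - 1)"
    moreover have x: "y - (i - 1) < 3 * \<tau> - 1" "y - (i - 1) + q < 3 * \<tau> - 1"
      using y by linarith+
    ultimately have "T ! (i - 1 + (y - (i - 1))) = T ! (i - 1 + (y - (i - 1) + q))"
      using nth[OF x(1)] nth[OF x(2)] by auto
    then show "T ! y = T ! (y + q)"
      using y by (simp add: add.assoc[symmetric])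
  next
    fix x assume "\<forall>y. i - 1 \<le> y \<and> y + q < i - 1 + (3 * \<tau> - 1) \<longrightarrow> T ! y = T ! (y + q)"
      and x: "x + q < 3 * \<tau> - 1"
    then have "T ! (i - 1 + x) = T ! (i - 1 + x + q)"
      by auto
    then show "?W ! x = ?W ! (x + q)"
      using nth x by (simp add: add.assoc)
  qed
  then show ?thesis
    unfolding is_period_def len by blast
qed

lemma per_window_Rset:
  assumes "i \<in> Rset T \<tau>" and "1 \<le> \<tau>"
  shows "0 < per (window T \<tau> i)" and "3 * per (window T \<tau> i) \<le> \<tau>"
    and "window_period T (i - 1) (3 * \<tau> - 1) (per (window T \<tau> i))"
    and "\<lbrakk>0 < q; q \<le> 3 * \<tau> - 1; window_period T (i - 1) (3 * \<tau> - 1) q\<rbrakk>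
      \<Longrightarrow> per (window T \<tau> i) \<le> q"
proof -
  have i: "1 \<le> i" "i + 3 * \<tau> \<le> length T + 2" "3 * per (window T \<tau> i) \<le> \<tau>"
    using assms(1) by (auto simp: Rset_iff)
  have "window T \<tau> i \<noteq> []"
    using i assms(2) by (auto simp: sub_def)
  then have "is_period (window T \<tau> i) (per (window T \<tau> i))"
    by (rule is_period_per)
  then show "0 < per (window T \<tau> i)"
    and "window_period T (i - 1) (3 * \<tau> - 1) (per (window T \<tau> i))"
    using is_period_window_iff[OF i(1,2)] by blast+
  show "3 * per (window T \<tau> i) \<le> \<tau>"
    by (rule i(3))
  show "\<lbrakk>0 < q; q \<le> 3 * \<tau> - 1; window_period T (i - 1) (3 * \<tau> - 1) q\<rbrakk>
      \<Longrightarrow> per (window T \<tau> i) \<le> q"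
    using is_period_window_iff[OF i(1,2)] per_le by blast
qed

lemma window_period_Suc_start:
  assumes p: "window_period T a L p" and p': "window_period T (Suc a) L p'"
    and "p \<le> p'" and "p + p' < L" and "0 < p'"
  shows "window_period T (Suc a) L p"
  unfolding window_period_def
proof safe
  fix y assume y: "Suc a \<le> y" "y + p < Suc a + L"
  show "T ! y = T ! (y + p)"
  proof (cases "y + p < a + L")
    case True
    then show ?thesis
      using p y unfolding window_period_def by simp
  next
    case False
    then have "y + p = a + L"
      using y by simp
    have "T ! (y - p') = T ! (y - p' + p')"
      using \<open>y + p = a + L\<close> assms(3-5) by (intro window_periodD[OF p']) auto
    moreover have "T ! (y - p') = T ! (y - p' + p)"
      using \<open>y + p = a + L\<close> assms(3-5) by (intro window_periodD[OF p]) auto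
    moreover have "T ! (y - p' + p) = T ! (y - p' + p + p')"
      using \<open>y + p = a + L\<close> assms(3-5) by (intro window_periodD[OF p']) auto
    moreover have "y - p' + p' = y" and "y - p' + p + p' = y + p"
      using \<open>y + p = a + L\<close> assms(3-5) by auto
    ultimately show ?thesis
      by metis
  qed
qed

lemma window_period_pred_start:
  assumes p: "window_period T a L p" and p': "window_period T (Suc a) L p'"
    and "p' \<le> p" and "p + p' < L" and "0 < p"
  shows "window_period T a L p'"
  unfolding window_period_def
proof safe
  fix y assume y: "a \<le> y" "y + p' < a + L"
  show "T ! y = T ! (y + p')"
  proof (cases "y = a")
    case True
    have "T ! a = T ! (a + p)" and "T ! (a + p') = T ! (a + p' + p)"
      using assms(3-5) by (auto intro: window_periodD[OF p])
    moreover have "T ! (a + p) = T ! (a + p + p')"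
      using assms(3-5) by (auto intro: window_periodD[OF p'])
    ultimately show ?thesis
      using True by (simp add: add.commute add.left_commute)
  qed (use p' y in \<open>auto intro: window_periodD\<close>)
qed

lemma per_window_Suc:
  assumes "i \<in> Rset T \<tau>" and "Suc i \<in> Rset T \<tau>" and "1 \<le> \<tau>"
  shows "per (window T \<tau> (Suc i)) = per (window T \<tau> i)"
proof -
  define p p' where "p = per (window T \<tau> i)" and "p' = per (window T \<tau> (Suc i))"
  note A = per_window_Rset[OF assms(1,3), folded p_def]
    and B = per_window_Rset[OF assms(2,3), folded p'_def]
  have "Suc (i - 1) = i"
    using assms(1) by (simp add: Rset_iff)
  then have B': "window_period T (Suc (i - 1)) (3 * \<tau> - 1) p'"
    using B(3) by simp
  have sum: "p + p' < 3 * \<tau> - 1"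
    using A(2) B(2) assms(3) by linarith
  show ?thesis
  proof (cases "p \<le> p'")
    case True
    then have "window_period T (Suc i - 1) (3 * \<tau> - 1) p"
      using window_period_Suc_start[OF A(3) B' True sum] B(1) \<open>Suc (i - 1) = i\<close> by simp
    then have "p' \<le> p"
      using B(4) A(1) sum by simp
    then show ?thesis
      using True by (simp add: p_def p'_def)
  next
    case False
    then have "window_period T (i - 1) (3 * \<tau> - 1) p'"
      using window_period_pred_start[OF A(3) B' _ sum] A(1) by simp
    then have "p \<le> p'"
      using A(4) B(1) sum by simp
    then show ?thesis
      using False by (simp add: p_def p'_def)
  qed
qed

lemma run_end:
  assumes "j \<in> Rset T \<tau>"
  obtains m where "endp T \<tau> j = m + 3 * \<tau> - 2" and "j < m" and "m \<notin> Rset T \<tau>"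
    and "\<And>i. j \<le> i \<Longrightarrow> i < m \<Longrightarrow> i \<in> Rset T \<tau>"
proof -
  define m where "m = (LEAST j'. j \<le> j' \<and> j' \<notin> Rset T \<tau>)"
  have "j \<le> length T + 3 \<and> length T + 3 \<notin> Rset T \<tau>"
    using assms by (auto simp: Rset_iff)
  then have m: "j \<le> m \<and> m \<notin> Rset T \<tau>"
    unfolding m_def by (rule LeastI)
  moreover have "i \<in> Rset T \<tau>" if "j \<le> i" "i < m" for i
    using not_less_Least[of i "\<lambda>j'. j \<le> j' \<and> j' \<notin> Rset T \<tau>"] that unfolding m_def by blast
  moreover have "j \<noteq> m"
    using m assms by blast
  ultimately show thesis
    using that[of m] by (simp add: endp_def m_def)
qed

lemma per_window_run:
  assumes "j \<le> i" and run: "\<And>k. j \<le> k \<Longrightarrow> k \<le> i \<Longrightarrow> k \<in> Rset T \<tau>" and "1 \<le> \<tau>"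
  shows "per (window T \<tau> i) = per (window T \<tau> j)"
  using \<open>j \<le> i\<close>
proof (induction rule: dec_induct)
  case (step k)
  then show ?case
    using per_window_Suc[of k T \<tau>] run \<open>1 \<le> \<tau>\<close> by simp
qed simp

lemma run_window_period:
  assumes "j \<in> Rset T \<tau>" and "1 \<le> \<tau>"
  shows "j + 3 * \<tau> - 1 \<le> endp T \<tau> j" and "endp T \<tau> j \<le> length T + 1"
    and "window_period T (j - 1) (endp T \<tau> j - j) (per (window T \<tau> j))"
proof -
  define p where "p = per (window T \<tau> j)"
  obtain m where e: "endp T \<tau> j = m + 3 * \<tau> - 2" and "j < m"
    and run: "\<And>i. j \<le> i \<Longrightarrow> i < m \<Longrightarrow> i \<in> Rset T \<tau>"
    using run_end[OF assms(1)] by blast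
  have period_i: "window_period T (i - 1) (3 * \<tau> - 1) p" if "j \<le> i" "i < m" for i
    using per_window_Rset(3)[OF run[OF that] assms(2)] per_window_run[OF that(1) _ assms(2)]
      run that by (simp add: p_def)
  have "0 < p" "3 * p \<le> \<tau>"
    using per_window_Rset(1,2)[OF assms] by (simp_all add: p_def)
  have "1 \<le> j"
    using assms(1) by (simp add: Rset_iff)
  show "j + 3 * \<tau> - 1 \<le> endp T \<tau> j"
    using e \<open>j < m\<close> assms(2) by simp
  have "m - 1 \<in> Rset T \<tau>"
    using run \<open>j < m\<close> by simp
  then have "m - 1 + 3 * \<tau> \<le> length T + 2"
    by (simp add: Rset_iff)
  then show "endp T \<tau> j \<le> length T + 1"
    using e \<open>j < m\<close> by linarith
  show "window_period T (j - 1) (endp T \<tau> j - j) p"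
    unfolding window_period_def
  proof safe
    fix y assume y: "j - 1 \<le> y" "y + p < j - 1 + (endp T \<tau> j - j)"
    define i where "i = max j (y + p + 2 - (3 * \<tau> - 1))"
    have "j \<le> i" "i < m"
      using y e \<open>1 \<le> j\<close> \<open>j < m\<close> \<open>0 < p\<close> \<open>3 * p \<le> \<tau>\<close> assms(2) unfolding i_def by auto
    moreover have "i - 1 \<le> y" "y + p < i - 1 + (3 * \<tau> - 1)"
      using y \<open>1 \<le> j\<close> \<open>0 < p\<close> \<open>3 * p \<le> \<tau>\<close> assms(2) unfolding i_def by auto
    ultimately show "T ! y = T ! (y + p)"
      using window_periodD[OF period_i] by blast
  qed
qed

lemma run_breaks:
  assumes "j \<in> Rset T \<tau>" and "1 \<le> \<tau>" and "endp T \<tau> j \<le> length T"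
  shows "T ! (endp T \<tau> j - 1) \<noteq> T ! (endp T \<tau> j - 1 - per (window T \<tau> j))"
proof
  define p where "p = per (window T \<tau> j)"
  assume continues: "T ! (endp T \<tau> j - 1) = T ! (endp T \<tau> j - 1 - p)"
  obtain m where e: "endp T \<tau> j = m + 3 * \<tau> - 2" and "j < m" and "m \<notin> Rset T \<tau>"
    and run: "\<And>i. j \<le> i \<Longrightarrow> i < m \<Longrightarrow> i \<in> Rset T \<tau>"
    using run_end[OF assms(1)] by blast
  have "1 \<le> j" "0 < p" "3 * p \<le> \<tau>"
    using assms(1) per_window_Rset(1,2)[OF assms(1,2)] by (simp_all add: Rset_iff p_def)
  have last: "window_period T (m - 1 - 1) (3 * \<tau> - 1) p"
    using per_window_Rset(3)[OF run assms(2), of "m - 1"] per_window_run[of j "m - 1"] run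
      assms(2) \<open>j < m\<close> by (simp add: p_def)
  have "window_period T (m - 1) (3 * \<tau> - 1) p"
    unfolding window_period_def
  proof safe
    fix y assume y: "m - 1 \<le> y" "y + p < m - 1 + (3 * \<tau> - 1)"
    show "T ! y = T ! (y + p)"
    proof (cases "y + p < m - 1 - 1 + (3 * \<tau> - 1)")
      case True
      then show ?thesis
        using window_periodD[OF last] y by simp
    next
      case False
      then have "y + p = endp T \<tau> j - 1"
        using y e \<open>1 \<le> j\<close> \<open>j < m\<close> by linarith
      then show ?thesis
        using continues by (metis add_diff_cancel_right')
    qed
  qed
  moreover have "1 \<le> m" "m + 3 * \<tau> \<le> length T + 2"
    using e \<open>1 \<le> j\<close> \<open>j < m\<close> assms(3) by linarith+
  ultimately have "per (window T \<tau> m) \<le> p"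
    using is_period_window_iff per_le \<open>0 < p\<close> \<open>3 * p \<le> \<tau>\<close> by fastforce
  then have "m \<in> Rset T \<tau>"
    using \<open>1 \<le> m\<close> \<open>m + 3 * \<tau> \<le> length T + 2\<close> \<open>3 * p \<le> \<tau>\<close> by (simp add: Rset_iff)
  with \<open>m \<notin> Rset T \<tau>\<close> show False ..
qed

lemma nth_suf: "j - 1 \<le> length T \<Longrightarrow> suf T j ! i = T ! (j - 1 + i)"
  by (simp add: suf_def)

lemma max_periodic_prefix_suf:
  assumes "j \<in> Rset T \<tau>" and "1 \<le> \<tau>"
  shows "max_periodic_prefix (suf T j) (per (window T \<tau> j)) (endp T \<tau> j - j)"
proof -
  define p t where "p = per (window T \<tau> j)" and "t = endp T \<tau> j - j"
  note run = run_window_period[OF assms, folded p_def]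
  have "1 \<le> j" "0 < p" "3 * p \<le> \<tau>"
    using assms(1) per_window_Rset(1,2)[OF assms] by (simp_all add: Rset_iff p_def)
  have "j - 1 \<le> length T" "j + t = endp T \<tau> j" "3 * \<tau> - 1 \<le> t"
    using run(1,2) assms(2) by (auto simp: t_def)
  note nth = nth_suf[OF \<open>j - 1 \<le> length T\<close>]
  have "t \<le> length (suf T j)"
    using run(2) \<open>j + t = endp T \<tau> j\<close> \<open>1 \<le> j\<close> by (simp add: suf_def)
  moreover have "suf T j ! i = suf T j ! (i + p)" if "i + p < t" for i
    using window_periodD[OF run(3), of "j - 1 + i"] that nth \<open>j + t = endp T \<tau> j\<close>
    by (simp add: add.assoc)
  moreover have "suf T j ! t \<noteq> suf T j ! (t - p)" if "t < length (suf T j)"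
  proof -
    have "endp T \<tau> j \<le> length T"
      using that \<open>j + t = endp T \<tau> j\<close> \<open>1 \<le> j\<close> by (simp add: suf_def)
    moreover have "j - 1 + t = endp T \<tau> j - 1" "j - 1 + (t - p) = endp T \<tau> j - 1 - p"
      using \<open>j + t = endp T \<tau> j\<close> \<open>1 \<le> j\<close> \<open>3 * p \<le> \<tau>\<close> \<open>3 * \<tau> - 1 \<le> t\<close> by auto
    ultimately show ?thesis
      using run_breaks[OF assms] nth by (simp add: p_def)
  qed
  ultimately show ?thesis
    unfolding max_periodic_prefix_def p_def[symmetric] t_def[symmetric]
    using \<open>0 < p\<close> \<open>3 * p \<le> \<tau>\<close> \<open>3 * \<tau> - 1 \<le> t\<close> by auto
qed

lemma Lroot_eq_Min_rotations:
  assumes "j \<in> Rset T \<tau>" and "1 \<le> \<tau>"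
  defines "p \<equiv> per (window T \<tau> j)"
  shows "Lroot T \<tau> j = Min ((\<lambda>t. take p (drop t (window T \<tau> j))) ` {..<p})"
proof -
  have "1 \<le> j" "3 * p \<le> \<tau>"
    using assms(1) per_window_Rset(2)[OF assms(1,2)] by (simp_all add: Rset_iff p_def)
  have "{sub T (j + t) (j + t + p) | t. t < p} = (\<lambda>t. sub T (j + t) (j + t + p)) ` {..<p}"
    by auto
  also have "\<dots> = (\<lambda>t. take p (drop t (window T \<tau> j))) ` {..<p}"
    using \<open>1 \<le> j\<close> \<open>3 * p \<le> \<tau>\<close>
    by (intro image_cong) (simp_all add: sub_def drop_take min_def add.commute add.left_commute)
  finally show ?thesis
    unfolding Lroot_def Let_def p_def by simp
qed

lemma Lroot_rotation:
  assumes "j \<in> Rset T \<tau>" and "1 \<le> \<tau>"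
  obtains t0 where "t0 < per (window T \<tau> j)"
    and "Lroot T \<tau> j = take (per (window T \<tau> j)) (drop t0 (window T \<tau> j))"
proof -
  have "0 < per (window T \<tau> j)"
    by (rule per_window_Rset(1)[OF assms])
  then have "Lroot T \<tau> j \<in> (\<lambda>t. take (per (window T \<tau> j)) (drop t (window T \<tau> j)))
      ` {..<per (window T \<tau> j)}"
    unfolding Lroot_eq_Min_rotations[OF assms] by (intro Min_in) auto
  then show thesis
    using that by blast
qed

lemma length_Lroot:
  assumes "j \<in> Rset T \<tau>" and "1 \<le> \<tau>"
  shows "length (Lroot T \<tau> j) = per (window T \<tau> j)"
proof -
  obtain t0 where "t0 < per (window T \<tau> j)"
    and "Lroot T \<tau> j = take (per (window T \<tau> j)) (drop t0 (window T \<tau> j))"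
    using Lroot_rotation[OF assms] .
  moreover have "length (window T \<tau> j) = 3 * \<tau> - 1" "3 * per (window T \<tau> j) \<le> \<tau>"
    using assms(1) per_window_Rset(2)[OF assms] by (auto simp: Rset_iff sub_def)
  ultimately show ?thesis
    by simp
qed

lemma Lhead_eq_The:
  "Lhead T \<tau> j = (THE s. L_decomposition (take (endp T \<tau> j - j) (suf T j)) (Lroot T \<tau> j) s)"
  unfolding Lhead_def Let_def L_decomposition_def by (simp add: sub_def suf_def)

lemma Lhead_eq_rotation_offset:
  assumes "j \<in> Rset T \<tau>" and "1 \<le> \<tau>" and "t0 < per (window T \<tau> j)"
    and root: "Lroot T \<tau> j = take (per (window T \<tau> j)) (drop t0 (window T \<tau> j))"
  shows "Lhead T \<tau> j = t0"
    and "L_decomposition (take (endp T \<tau> j - j) (suf T j)) (Lroot T \<tau> j) t0"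
proof -
  define p t X where "p = per (window T \<tau> j)" and "t = endp T \<tau> j - j"
    and "X = take t (suf T j)"
  have run: "max_periodic_prefix (suf T j) p t"
    using max_periodic_prefix_suf[OF assms(1,2)] by (simp add: p_def t_def)
  then have len_X: "length X = t" and period: "\<forall>i. i + p < length X \<longrightarrow> X ! i = X ! (i + p)"
    unfolding max_periodic_prefix_def X_def by auto
  have "3 * \<tau> - 1 \<le> t" "0 < p" "3 * p \<le> \<tau>"
    using run_window_period(1)[OF assms(1,2)] per_window_Rset(1,2)[OF assms(1,2)]
    by (auto simp: t_def p_def)
  have "t0 < p"
    using assms(3) by (simp add: p_def)
  have W: "window T \<tau> j = take (3 * \<tau> - 1) X"
    using \<open>3 * \<tau> - 1 \<le> t\<close>
    unfolding window_eq_take_suf X_def by (simp add: min_def)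
  have "take p (drop t0 (window T \<tau> j)) = take p (drop t0 X)"
    using \<open>3 * p \<le> \<tau>\<close> \<open>t0 < p\<close> unfolding W by (simp add: drop_take min_def)
  then have root_X: "Lroot T \<tau> j = take p (drop t0 X)"
    using root by (simp add: p_def)
  show decomposition: "L_decomposition (take (endp T \<tau> j - j) (suf T j)) (Lroot T \<tau> j) t0"
    unfolding root_X X_def[symmetric] t_def[symmetric]
    using L_decomposition_rotation[OF \<open>0 < p\<close> _ _ period] assms(3) len_X \<open>3 * p \<le> \<tau>\<close>
      \<open>3 * \<tau> - 1 \<le> t\<close> by (simp add: p_def)
  have primitive: "\<not> (\<forall>i. i + d < length X \<longrightarrow> X ! i = X ! (i + d))" if "0 < d" "d < p" for d
  proof
    assume "\<forall>i. i + d < length X \<longrightarrow> X ! i = X ! (i + d)"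
    moreover have "d \<le> 3 * \<tau> - 1"
      using that \<open>3 * p \<le> \<tau>\<close> by linarith
    ultimately have "per (window T \<tau> j) \<le> d"
      unfolding W using that(1) \<open>3 * \<tau> - 1 \<le> t\<close> len_X by (intro per_take_le) simp_all
    then show False
      using that(2) p_def by simp
  qed
  have "length (Lroot T \<tau> j) = p"
    using length_Lroot[OF assms(1,2)] p_def by simp
  have "Lhead T \<tau> j = (THE s. L_decomposition X (Lroot T \<tau> j) s)"
    unfolding Lhead_eq_The X_def t_def ..
  also have "\<dots> = t0"
    using decomposition L_decomposition_unique[of X "Lroot T \<tau> j"] primitive
      \<open>length (Lroot T \<tau> j) = p\<close> unfolding X_def t_def by (intro the_equality) auto
  finally show "Lhead T \<tau> j = t0" .
qed

lemma ltype_eq_breaks_upward: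
  assumes "j \<in> Rset T \<tau>" and "1 \<le> \<tau>"
  shows "ltype T \<tau> j =
    (if breaks_upward (suf T j) (per (window T \<tau> j)) (endp T \<tau> j - j) then 1 else -1)"
proof -
  define p e where "p = per (window T \<tau> j)" and "e = endp T \<tau> j"
  have "1 \<le> j" "3 * p \<le> \<tau>"
    using assms(1) per_window_Rset(2)[OF assms] by (simp_all add: Rset_iff p_def)
  have "j + 3 * \<tau> - 1 \<le> e" "e \<le> length T + 1"
    using run_window_period(1,2)[OF assms] by (simp_all add: e_def)
  then have "j + p \<le> e"
    using \<open>3 * p \<le> \<tau>\<close> assms(2) by linarith
  then have "e - j < length (suf T j) \<longleftrightarrow> e \<le> length T"
    and "e \<le> length T \<Longrightarrow> suf T j ! (e - j) = T ! (e - 1)"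
    and "e \<le> length T \<Longrightarrow> suf T j ! (e - j - p) = T ! (e - length (Lroot T \<tau> j) - 1)"
    using \<open>1 \<le> j\<close> \<open>e \<le> length T + 1\<close> length_Lroot[OF assms]
    by (auto simp: suf_def p_def)
  then show ?thesis
    unfolding ltype_def Let_def breaks_upward_def p_def[symmetric] e_def[symmetric] by auto
qed

section \<open>The sets \<open>R\<^sub>s\<^sub>,\<^sub>H\<close>\<close>

lemma RsH_run:
  assumes "j \<in> RsH T \<tau> s H" and "1 \<le> \<tau>"
  shows "max_periodic_prefix (suf T j) (length H) (endp T \<tau> j - j)"
    and "\<And>i. i < endp T \<tau> j - j \<Longrightarrow> suf T j ! i = H ! ((i + length H - s) mod length H)"
    and "ltype T \<tau> j = (if breaks_upward (suf T j) (length H) (endp T \<tau> j - j) then 1 else -1)"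
proof -
  have j: "j \<in> Rset T \<tau>" "Lroot T \<tau> j = H" "Lhead T \<tau> j = s"
    using assms(1) by (auto simp: RsH_def)
  have p: "per (window T \<tau> j) = length H"
    using length_Lroot[OF j(1) assms(2)] j(2) by simp
  show run: "max_periodic_prefix (suf T j) (length H) (endp T \<tau> j - j)"
    using max_periodic_prefix_suf[OF j(1) assms(2)] p by simp
  show "ltype T \<tau> j = (if breaks_upward (suf T j) (length H) (endp T \<tau> j - j) then 1 else -1)"
    using ltype_eq_breaks_upward[OF j(1) assms(2)] p by simp
  obtain t0 where "t0 < per (window T \<tau> j)"
    and "Lroot T \<tau> j = take (per (window T \<tau> j)) (drop t0 (window T \<tau> j))"
    using Lroot_rotation[OF j(1) assms(2)] .
  from Lhead_eq_rotation_offset[OF j(1) assms(2) this]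
  have "L_decomposition (take (endp T \<tau> j - j) (suf T j)) H s"
    using j by simp
  from L_decomposition_nth(2)[OF this]
  show "\<And>i. i < endp T \<tau> j - j \<Longrightarrow> suf T j ! i = H ! ((i + length H - s) mod length H)"
    using run unfolding max_periodic_prefix_def by simp
qed

lemma RsH_if_LCE:
  assumes "j \<in> RsH T \<tau> s H" and "1 \<le> \<tau>" and "1 \<le> j'" and "3 * \<tau> - 1 \<le> LCE T j j'"
  shows "j' \<in> RsH T \<tau> s H"
proof -
  have j: "j \<in> Rset T \<tau>" "Lroot T \<tau> j = H" "Lhead T \<tau> j = s"
    using assms(1) by (auto simp: RsH_def)
  have "3 * \<tau> - 1 \<le> length (suf T j')"
    and "take (3 * \<tau> - 1) (suf T j) = take (3 * \<tau> - 1) (suf T j')"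
    using assms(4) unfolding LCE_def le_length_longest_common_prefix_iff
    by (auto intro: nth_equalityI)
  then have W: "window T \<tau> j' = window T \<tau> j"
    by (metis window_eq_take_suf)
  have j': "j' \<in> Rset T \<tau>"
    using j(1) W assms(2,3) \<open>3 * \<tau> - 1 \<le> length (suf T j')\<close> by (auto simp: Rset_iff suf_def)
  have root: "Lroot T \<tau> j' = H"
    using Lroot_eq_Min_rotations[OF j' assms(2)] Lroot_eq_Min_rotations[OF j(1) assms(2)] W j(2)
    by simp
  obtain t0 where "t0 < per (window T \<tau> j)"
    and "Lroot T \<tau> j = take (per (window T \<tau> j)) (drop t0 (window T \<tau> j))"
    using Lroot_rotation[OF j(1) assms(2)] .
  then have "Lhead T \<tau> j = t0" and "Lhead T \<tau> j' = t0"
    using Lhead_eq_rotation_offset(1)[OF j(1) assms(2)] Lhead_eq_rotation_offset(1)[OF j' assms(2)]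
      W root j(2) by simp_all
  then show ?thesis
    using j' root j(3) by (simp add: RsH_def)
qed

lemma RsH_compare:
  assumes "j \<in> RsH T \<tau> s H" and "j' \<in> RsH T \<tau> s H" and "1 \<le> \<tau>"
  defines "t \<equiv> endp T \<tau> j - j" and "t' \<equiv> endp T \<tau> j' - j'"
  shows "min t t' \<le> LCE T j j'"
    and "ltype T \<tau> j \<noteq> ltype T \<tau> j' \<Longrightarrow> suf T j < suf T j' \<longleftrightarrow> ltype T \<tau> j < ltype T \<tau> j'"
    and "ltype T \<tau> j = -1 \<Longrightarrow> ltype T \<tau> j' = -1 \<Longrightarrow> t \<noteq> t' \<Longrightarrow> suf T j < suf T j' \<longleftrightarrow> t < t'"
    and "ltype T \<tau> j = 1 \<Longrightarrow> ltype T \<tau> j' = 1 \<Longrightarrow> t \<noteq> t' \<Longrightarrow> suf T j < suf T j' \<longleftrightarrow> t' < t"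
    and "ltype T \<tau> j \<noteq> ltype T \<tau> j' \<or> t \<noteq> t' \<Longrightarrow> LCE T j j' = min t t'"
proof -
  note u = RsH_run[OF assms(1,3), folded t_def] and v = RsH_run[OF assms(2,3), folded t'_def]
  have "\<forall>i<min t t'. suf T j ! i = suf T j' ! i"
    using u(2) v(2) by simp
  note compare = compare_max_periodic_prefixes[OF u(1) v(1) this, folded LCE_def]
  show "min t t' \<le> LCE T j j'"
    by (rule compare(1))
  show "ltype T \<tau> j \<noteq> ltype T \<tau> j' \<Longrightarrow> suf T j < suf T j' \<longleftrightarrow> ltype T \<tau> j < ltype T \<tau> j'"
    and "ltype T \<tau> j = -1 \<Longrightarrow> ltype T \<tau> j' = -1 \<Longrightarrow> t \<noteq> t' \<Longrightarrow> suf T j < suf T j' \<longleftrightarrow> t < t'"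
    and "ltype T \<tau> j = 1 \<Longrightarrow> ltype T \<tau> j' = 1 \<Longrightarrow> t \<noteq> t' \<Longrightarrow> suf T j < suf T j' \<longleftrightarrow> t' < t"
    and "ltype T \<tau> j \<noteq> ltype T \<tau> j' \<or> t \<noteq> t' \<Longrightarrow> LCE T j j' = min t t'"
    using compare(2-5) unfolding u(3) v(3) by (auto split: if_splits)
qed

lemma LCE_ge_if_RsH:
  assumes "j \<in> RsH T \<tau> s H" and "j' \<in> RsH T \<tau> s H" and "1 \<le> \<tau>"
  shows "3 * \<tau> - 1 \<le> LCE T j j'"
proof -
  have "3 * \<tau> - 1 \<le> endp T \<tau> i - i" if "i \<in> RsH T \<tau> s H" for i
    using run_window_period(1)[of i T \<tau>] that assms(3) by (simp add: RsH_def)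
  then have "3 * \<tau> - 1 \<le> min (endp T \<tau> j - j) (endp T \<tau> j' - j')"
    using assms(1,2) by simp
  then show ?thesis
    using RsH_compare(1)[OF assms] by (rule order.trans)
qed

theorem lemma5p11:
  fixes T :: "nat list" and \<sigma> n \<tau> s j :: nat and \<mu> :: real and H :: "nat list"
  assumes "n = length T"
    and "\<forall>c \<in> set T. c < \<sigma>"
    and "2 \<le> \<sigma>" and "real \<sigma> < real n powr (1/7)"
    and "0 < \<mu>" and "\<mu> < 1/6"
    and "\<tau> = nat \<lfloor>\<mu> * log (real \<sigma>) (real n)\<rfloor>" and "1 \<le> \<tau>"
    and "j \<in> RsH T \<tau> s H"
  shows "\<forall>j' \<in> {1..n}. (3 * \<tau> - 1 \<le> LCE T j j' \<longleftrightarrow> j' \<in> RsH T \<tau> s H)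
    \<and> (\<forall>j' \<in> RsH T \<tau> s H.
           (let t = endp T \<tau> j - j; t' = endp T \<tau> j' - j' in
              min t t' \<le> LCE T j j'
            \<and> (ltype T \<tau> j \<noteq> ltype T \<tau> j' \<longrightarrow>
                  (suf T j < suf T j' \<longleftrightarrow> ltype T \<tau> j < ltype T \<tau> j'))
            \<and> (ltype T \<tau> j = -1 \<and> ltype T \<tau> j' = -1 \<and> t \<noteq> t' \<longrightarrow>
                  (suf T j < suf T j' \<longleftrightarrow> t < t'))
            \<and> (ltype T \<tau> j = 1 \<and> ltype T \<tau> j' = 1 \<and> t \<noteq> t' \<longrightarrow>
                  (suf T j < suf T j' \<longleftrightarrow> t > t'))
            \<and> ((ltype T \<tau> j \<noteq> ltype T \<tau> j' \<or> t \<noteq> t') \<longrightarrow> LCE T j j' = min t t')))"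
proof -
  have "j' \<in> RsH T \<tau> s H" if "j' \<in> {1..n}" "3 * \<tau> - 1 \<le> LCE T j j'" for j'
    using RsH_if_LCE[OF assms(9,8)] that by simp
  then show ?thesis
    using LCE_ge_if_RsH[OF assms(9) _ assms(8)] RsH_compare[OF assms(9) _ assms(8)]
    unfolding Let_def by blast
qed

end
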